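(* Let $K=3$ and $r^\star(a)=\mathbb{1}(a=1)$ for $a\in\{1,2,3\}$. For every integer $n>500$ there exists a distribution $\mu$ on ordered pairs of distinct arms such that, if $\mathcal{D}$ consists of $n$ i.i.d. samples generated as in the context, then with probability at least $0.09$ the following holds: the empirical loss $\hat{\mathcal{L}}_{\mathsf{CE}}(\mathcal{D},\cdot)$ has no minimizer on $R_0=\{r\in\mathbb{R}^3: r(3)=0\}$, and for every sequence $(r^{(m)})_{m\ge1}\subset R_0$ with $\hat{\mathcal{L}}_{\mathsf{CE}}(\mathcal{D},r^{(m)})\to\inf_{r\in R_0}\hat{\mathcal{L}}_{\mathsf{CE}}(\mathcal{D},r)$ we have $$\mathcal{L}_{\mathsf{CE}}(r^{(m)})-\mathcal{L}_{\mathsf{CE}}(r^\star)\to+\infty\quad(m\to\infty).$$ (In the paper's phrasing: with probability at least $0.09$, $\mathcal{L}_{\mathsf{CE}}(\hat r_{\mathsf{MLE}})-\mathcal{L}_{\mathsf{CE}}(r^\star)\ge C$ for arbitrarily large $C$.)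
   Context: $K$-armed bandit preference model. Arms are $[K]$, with deterministic ground-truth rewards $r^\star(a)$. Let $\sigma(x)=e^x/(1+e^x)$. A sample $(a,a',y)$ is generated by drawing $(a,a')\sim\mu$ (a distribution on ordered pairs of distinct arms) and then $y\sim\mathrm{Bernoulli}(\sigma(r^\star(a)-r^\star(a')))$, $y=1$ meaning $a$ is preferred to $a'$; the dataset $\mathcal{D}=\{(a_i,a_i',y_i)\}_{i=1}^n$ consists of $n$ i.i.d. samples. Empirical cross-entropy loss: $$\hat{\mathcal{L}}_{\mathsf{CE}}(\mathcal{D},r)=-\frac1n\sum_{i=1}^n\Big[y_i\log\sigma(r(a_i)-r(a_i'))+(1-y_i)\log\sigma(r(a_i')-r(a_i))\Big].$$ Population cross-entropy loss: $$\mathcal{L}_{\mathsf{CE}}(r)=-\mathbb{E}_{(a,a')\sim\mu}\Big[\sigma(r^\star(a)-r^\star(a'))\log\sigma(r(a)-r(a'))+\sigma(r^\star(a')-r^\star(a))\log\sigma(r(a')-r(a))\Big].$$ The MLE $\hat r_{\mathsf{MLE}}$ is the minimizer of the empirical loss normalized by $\hat r(K)=0$. *)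

theory Defs
  imports "HOL-Analysis.Analysis" "HOL-Probability.Probability"
begin

text \<open>Arms are the naturals 1, 2, 3 (K = 3). A reward function is r :: nat => real;
  only its values on arms matter.\<close>

definition sigm :: "real \<Rightarrow> real" where
  "sigm x = exp x / (1 + exp x)"

definition rstar :: "nat \<Rightarrow> real" where
  "rstar a = (if a = 1 then 1 else 0)"

definition arms :: "nat set" where
  "arms = {1, 2, 3}"

definition arm_pairs :: "(nat \<times> nat) set" where
  "arm_pairs = {(a, b). a \<in> arms \<and> b \<in> arms \<and> a \<noteq> b}"

text \<open>R_0 = {r in R^3 : r(3) = 0}; functions vanish outside the arms so that R_0 is exactly R^3 with r 3 = 0.\<close>
definition R0 :: "(nat \<Rightarrow> real) set" where
  "R0 = {r. r 3 = 0 \<and> (\<forall>a. a \<notin> arms \<longrightarrow> r a = 0)}"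

text \<open>One sample (a, a', y): (a, a') ~ mu, y ~ Bernoulli(sigma(r*(a) - r*(a'))); y = True means y = 1.\<close>
definition sample_pmf :: "(nat \<times> nat) pmf \<Rightarrow> (nat \<times> nat \<times> bool) pmf" where
  "sample_pmf \<mu> = bind_pmf \<mu> (\<lambda>(a, a'). map_pmf (\<lambda>y. (a, a', y))
       (bernoulli_pmf (sigm (rstar a - rstar a'))))"

definition data_pmf :: "nat \<Rightarrow> (nat \<times> nat) pmf \<Rightarrow> (nat \<Rightarrow> nat \<times> nat \<times> bool) pmf" where
  "data_pmf n \<mu> = Pi_pmf {..<n} (0, 0, False) (\<lambda>_. sample_pmf \<mu>)"

definition emp_CE :: "nat \<Rightarrow> (nat \<Rightarrow> nat \<times> nat \<times> bool) \<Rightarrow> (nat \<Rightarrow> real) \<Rightarrow> real" where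
  "emp_CE n D r = - (1 / real n) * (\<Sum>i<n. case D i of (a, a', y) \<Rightarrow>
      of_bool y * ln (sigm (r a - r a')) + (1 - of_bool y) * ln (sigm (r a' - r a)))"

definition pop_CE :: "(nat \<times> nat) pmf \<Rightarrow> (nat \<Rightarrow> real) \<Rightarrow> real" where
  "pop_CE \<mu> r = - measure_pmf.expectation \<mu> (\<lambda>(a, a').
      sigm (rstar a - rstar a') * ln (sigm (r a - r a'))
      + sigm (rstar a' - rstar a) * ln (sigm (r a' - r a)))"

end

theory Submission
  imports Defs
begin

text \<open>Take \<mu> to compare arms 2 and 3 with probability p = 1/n and arms 1 and 3 otherwise.
  With probability (1 - p/2)^n - (1 - p)^n \<ge> 1/10 the data contain at least one comparison
  of 2 against 3, and arm 2 loses every one of them. On such data the empirical loss depends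
  on r 2 only through a positive multiple of softplus (r 2), which has infimum 0 but no
  minimiser; hence no minimiser exists and every minimising sequence has r 2 \<rightarrow> -\<infinity>.
  The pair (2,3) has positive \<mu>-mass and equal true rewards, so the population loss grows
  at least like -p r(2)/2 along such a sequence.\<close>

lemma sigm_pos: "0 < sigm x"
  by (simp add: sigm_def add_pos_pos)

lemma sigm_less_1: "sigm x < 1"
  by (simp add: sigm_def add_pos_pos pos_divide_less_eq)

lemma ln_sigm_nonpos: "ln (sigm x) \<le> 0"
  using sigm_pos[of x] sigm_less_1[of x] by simp

lemma sigm_0: "sigm 0 = 1/2"
  by (simp add: sigm_def)

definition softplus :: "real \<Rightarrow> real" where
  "softplus x = ln (1 + exp x)"

lemma ln_sigm_eq_neg_softplus: "ln (sigm x) = - softplus (-x)"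
  by (simp add: sigm_def softplus_def exp_minus ln_div add_pos_pos field_simps)

lemma softplus_pos: "0 < softplus x"
  by (simp add: softplus_def add_pos_pos)

lemma softplus_le_exp: "softplus x \<le> exp x"
  unfolding softplus_def by (rule ln_add_one_self_le_self) simp

lemma softplus_ge: "x \<le> softplus x"
  using ln_le_cancel_iff[of "exp x" "1 + exp x"] by (simp add: softplus_def add_pos_pos)

lemma softplus_less_iff [simp]: "softplus x < softplus y \<longleftrightarrow> x < y"
  by (simp add: softplus_def add_pos_pos)

lemma filterlim_at_bot_if_softplus_tendsto_0:
  assumes "((\<lambda>m. softplus (f m)) \<longlongrightarrow> 0) F"
  shows "filterlim f at_bot F"
  unfolding filterlim_at_bot_dense
proof
  fix M
  show "\<forall>\<^sub>F m in F. f m < M"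
    using order_tendstoD(2)[OF assms softplus_pos[of M]] by simp
qed

lemma measure_bind_bernoulli_pmf:
  assumes "0 \<le> p" "p \<le> 1"
  shows "measure_pmf.prob (bind_pmf (bernoulli_pmf p) f) A =
     p * measure_pmf.prob (f True) A + (1 - p) * measure_pmf.prob (f False) A"
proof -
  have "ennreal (measure_pmf.prob (bind_pmf (bernoulli_pmf p) f) A) =
      (\<integral>\<^sup>+b. ennreal (measure_pmf.prob (f b) A) \<partial>bernoulli_pmf p)"
    by (simp add: emeasure_bind_pmf measure_pmf.emeasure_eq_measure[symmetric])
  also have "\<dots> = ennreal (p * measure_pmf.prob (f True) A + (1 - p) * measure_pmf.prob (f False) A)"
    using assms by (simp add: ennreal_mult' ennreal_plus mult.commute)
  finally show ?thesis
    using assms by (subst (asm) ennreal_inj) auto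
qed

lemma emp_CE_nonneg: "0 \<le> emp_CE n D r"
proof -
  have "(\<Sum>i<n. case D i of (a, a', y) \<Rightarrow>
      of_bool y * ln (sigm (r a - r a')) + (1 - of_bool y) * ln (sigm (r a' - r a))) \<le> 0"
    by (intro sum_nonpos) (auto split: prod.split simp: ln_sigm_nonpos)
  then show ?thesis
    by (simp add: emp_CE_def divide_nonpos_nonneg)
qed

definition arm1_samples :: "(nat \<times> nat \<times> bool) set" where
  "arm1_samples = {(1, 3, y) | y. True}"

definition arm2_losing_samples :: "(nat \<times> nat \<times> bool) set" where
  "arm2_losing_samples = insert (2, 3, False) arm1_samples"

lemma emp_CE_fun_upd_2:
  assumes D: "\<forall>i<n. D i \<in> arm2_losing_samples" and "r 3 = 0"
  shows "emp_CE n D (r(2 := t)) = emp_CE n D r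
     + card {i\<in>{..<n}. D i = (2, 3, False)} / n * (softplus t - softplus (r 2))"
proof -
  define term_of where "term_of = (\<lambda>r i. case D i of (a, a', y) \<Rightarrow>
      of_bool y * ln (sigm (r a - r a')) + (1 - of_bool y) * ln (sigm (r a' - r a)))"
  define \<delta> where "\<delta> = softplus t - softplus (r 2)"
  have "term_of (r(2 := t)) i = term_of r i - (if D i = (2, 3, False) then \<delta> else 0)"
    if "i < n" for i
    using D that \<open>r 3 = 0\<close>
    by (auto simp: arm2_losing_samples_def arm1_samples_def term_of_def \<delta>_def ln_sigm_eq_neg_softplus)
  then have sum_upd: "sum (term_of (r(2 := t))) {..<n} =
      sum (term_of r) {..<n} - card {i\<in>{..<n}. D i = (2, 3, False)} * \<delta>"
    by (simp add: sum_subtractf sum.If_cases Int_def)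
  have emp_CE_eq: "emp_CE n D r' = - (1 / n) * sum (term_of r') {..<n}" for r'
    by (simp add: emp_CE_def term_of_def)
  show ?thesis
    unfolding emp_CE_eq sum_upd by (simp add: \<delta>_def divide_inverse algebra_simps)
qed

lemma R0_fun_upd_2: "r \<in> R0 \<Longrightarrow> r(2 := t) \<in> R0"
  by (simp add: R0_def arms_def)

text \<open>Lowering r 2 towards -\<infinity> removes the softplus penalty of every lost (2,3)
  comparison, each of which weighs at least 1/n.\<close>
lemma INF_emp_CE_le:
  assumes D: "\<forall>i<n. D i \<in> arm2_losing_samples"
    and lost: "i\<^sub>0 < n" "D i\<^sub>0 = (2, 3, False)" and r: "r \<in> R0"
  shows "(INF s\<in>R0. emp_CE n D s) \<le> emp_CE n D r - softplus (r 2) / n"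
proof -
  define c where "c = real (card {i\<in>{..<n}. D i = (2, 3, False)}) / n"
  have "card {i\<in>{..<n}. D i = (2, 3, False)} > 0"
    using lost by (auto simp: card_gt_0_iff)
  then have c: "1 / n \<le> c" "0 < c"
    using lost unfolding c_def by (simp_all add: divide_right_mono)
  have "(INF s\<in>R0. emp_CE n D s) \<le> emp_CE n D r - c * softplus (r 2)"
  proof (rule field_le_epsilon)
    fix e :: real
    assume "0 < e"
    define t where "t = ln (e / c)"
    have "c * softplus t \<le> e"
      using softplus_le_exp[of t] \<open>0 < e\<close> c by (simp add: t_def field_simps)
    have "(INF s\<in>R0. emp_CE n D s) \<le> emp_CE n D (r(2 := t))"
      by (rule cINF_lower[OF _ R0_fun_upd_2[OF r]]) (auto intro: bdd_belowI2 emp_CE_nonneg)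
    also have "\<dots> = emp_CE n D r + c * (softplus t - softplus (r 2))"
      using emp_CE_fun_upd_2[OF D] r by (simp add: R0_def c_def)
    finally show "(INF s\<in>R0. emp_CE n D s) \<le> emp_CE n D r - c * softplus (r 2) + e"
      using \<open>c * softplus t \<le> e\<close> by (simp add: algebra_simps)
  qed
  moreover have "softplus (r 2) / n \<le> c * softplus (r 2)"
    using mult_right_mono[OF c(1) less_imp_le[OF softplus_pos]] by simp
  ultimately show ?thesis
    by simp
qed

lemma emp_CE_no_minimizer:
  assumes "\<forall>i<n. D i \<in> arm2_losing_samples" "i\<^sub>0 < n" "D i\<^sub>0 = (2, 3, False)"
  shows "\<not> (\<exists>r\<in>R0. \<forall>s\<in>R0. emp_CE n D r \<le> emp_CE n D s)"
proof
  assume "\<exists>r\<in>R0. \<forall>s\<in>R0. emp_CE n D r \<le> emp_CE n D s"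
  then obtain r where r: "r \<in> R0" and min: "\<forall>s\<in>R0. emp_CE n D r \<le> emp_CE n D s"
    by blast
  have "emp_CE n D r \<le> (INF s\<in>R0. emp_CE n D s)"
    using r min by (intro cINF_greatest) auto
  moreover have "0 < softplus (r 2) / n"
    using softplus_pos assms(2) by simp
  ultimately show False
    using INF_emp_CE_le[OF assms r] by simp
qed

lemma emp_CE_minimizing_seq_at_bot:
  assumes "\<forall>i<n. D i \<in> arm2_losing_samples" "i\<^sub>0 < n" "D i\<^sub>0 = (2, 3, False)"
    and rs: "\<forall>m. rs m \<in> R0"
    and lim: "(\<lambda>m. emp_CE n D (rs m)) \<longlonglongrightarrow> (INF s\<in>R0. emp_CE n D s)"
  shows "filterlim (\<lambda>m. rs m 2) at_bot sequentially"
proof (rule filterlim_at_bot_if_softplus_tendsto_0, rule tendsto_sandwich)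
  let ?gap = "\<lambda>m. n * (emp_CE n D (rs m) - (INF s\<in>R0. emp_CE n D s))"
  show "\<forall>\<^sub>F m in sequentially. 0 \<le> softplus (rs m 2)"
    using softplus_pos by (simp add: less_imp_le)
  show "\<forall>\<^sub>F m in sequentially. softplus (rs m 2) \<le> ?gap m"
    using INF_emp_CE_le[OF assms(1-3)] rs assms(2) by (simp add: field_simps)
  show "?gap \<longlonglongrightarrow> 0"
    using tendsto_mult_right_zero[OF LIM_zero[OF lim]] by simp
qed simp

definition mu_hard :: "real \<Rightarrow> (nat \<times> nat) pmf" where
  "mu_hard p = map_pmf (\<lambda>b. if b then (2, 3) else (1, 3)) (bernoulli_pmf p)"

lemma set_pmf_mu_hard: "set_pmf (mu_hard p) \<subseteq> arm_pairs"
  by (auto simp: mu_hard_def arm_pairs_def arms_def)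

text \<open>All log-likelihood terms are nonpositive; keep only the term
  ln (sigm (r 2)) / 2 = - softplus (- r 2) / 2 \<le> r 2 / 2 of the pair (2,3).\<close>
lemma pop_CE_mu_hard_ge:
  assumes "0 \<le> p" "p \<le> 1" "r 3 = 0"
  shows "p / 2 * (- r 2) \<le> pop_CE (mu_hard p) r"
proof -
  define g where "g = sigm 1 * ln (sigm (r 1)) + sigm (-1) * ln (sigm (- r 1))"
  have "g \<le> 0"
    using sigm_pos[of 1] sigm_pos[of "-1"] ln_sigm_nonpos[of "r 1"] ln_sigm_nonpos[of "- r 1"]
    by (simp add: g_def add_nonpos_nonpos mult_nonneg_nonpos less_imp_le)
  have pop: "pop_CE (mu_hard p) r =
      p / 2 * (softplus (- r 2) - ln (sigm (- r 2))) - (1 - p) * g"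
    using assms by (simp add: pop_CE_def mu_hard_def g_def rstar_def sigm_0
        ln_sigm_eq_neg_softplus[of "r 2"] algebra_simps)
  have "p / 2 * (- r 2) \<le> p / 2 * (softplus (- r 2) - ln (sigm (- r 2)))"
    using softplus_ge[of "- r 2"] ln_sigm_nonpos[of "- r 2"] assms by (intro mult_left_mono) auto
  moreover have "(1 - p) * g \<le> 0"
    using \<open>g \<le> 0\<close> assms by (simp add: mult_nonneg_nonpos)
  ultimately show ?thesis
    unfolding pop by linarith
qed

lemma pop_CE_mu_hard_excess_at_top:
  assumes "0 < p" "p \<le> 1" and "\<forall>m. rs m 3 = 0"
    and bot: "filterlim (\<lambda>m. rs m 2) at_bot sequentially"
  shows "filterlim (\<lambda>m. pop_CE (mu_hard p) (rs m) - pop_CE (mu_hard p) rstar) at_top sequentially"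
proof (rule filterlim_at_top_mono)
  have "filterlim (\<lambda>m. p / 2 * (- rs m 2)) at_top sequentially"
    using bot assms(1)
    by (intro filterlim_tendsto_pos_mult_at_top[OF tendsto_const]) (auto simp: filterlim_uminus_at_bot)
  then show "filterlim (\<lambda>m. - pop_CE (mu_hard p) rstar + p / 2 * (- rs m 2)) at_top sequentially"
    by (rule filterlim_tendsto_add_at_top[OF tendsto_const])
  show "\<forall>\<^sub>F m in sequentially. - pop_CE (mu_hard p) rstar + p / 2 * (- rs m 2)
      \<le> pop_CE (mu_hard p) (rs m) - pop_CE (mu_hard p) rstar"
    using pop_CE_mu_hard_ge[of p "rs m" for m] assms by simp
qed

lemma sample_pmf_mu_hard:
  "sample_pmf (mu_hard p) = bind_pmf (bernoulli_pmf p) (\<lambda>b. if b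
     then map_pmf (\<lambda>y. (2, 3, y)) (bernoulli_pmf (1/2))
     else map_pmf (\<lambda>y. (1, 3, y)) (bernoulli_pmf (sigm 1)))"
  unfolding sample_pmf_def mu_hard_def bind_map_pmf
  by (intro bind_pmf_cong) (auto simp: rstar_def sigm_0)

lemma prob_arm2_losing_samples:
  assumes "0 \<le> p" "p \<le> 1"
  shows "measure_pmf.prob (sample_pmf (mu_hard p)) arm2_losing_samples = 1 - p / 2"
proof -
  have "(\<lambda>y. (2::nat, 3::nat, y)) -` arm2_losing_samples = {False}"
    "(\<lambda>y. (1::nat, 3::nat, y)) -` arm2_losing_samples = UNIV"
    by (auto simp: arm2_losing_samples_def arm1_samples_def)
  then show ?thesis
    using assms
    by (simp add: sample_pmf_mu_hard measure_bind_bernoulli_pmf measure_pmf_single algebra_simps)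
qed

lemma prob_arm1_samples:
  assumes "0 \<le> p" "p \<le> 1"
  shows "measure_pmf.prob (sample_pmf (mu_hard p)) arm1_samples = 1 - p"
proof -
  have "(\<lambda>y. (2::nat, 3::nat, y)) -` arm1_samples = {}"
    "(\<lambda>y. (1::nat, 3::nat, y)) -` arm1_samples = UNIV"
    by (auto simp: arm1_samples_def)
  then show ?thesis
    using assms by (simp add: sample_pmf_mu_hard measure_bind_bernoulli_pmf)
qed

lemma prob_some_arm2_loss:
  assumes "0 \<le> p" "p \<le> 1"
  shows "measure_pmf.prob (data_pmf n (mu_hard p))
      (Pi {..<n} (\<lambda>_. arm2_losing_samples) - Pi {..<n} (\<lambda>_. arm1_samples))
    = (1 - p / 2) ^ n - (1 - p) ^ n"
proof -
  have "Pi {..<n} (\<lambda>_. arm1_samples) \<subseteq> Pi {..<n} (\<lambda>_. arm2_losing_samples)"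
    by (auto simp: arm2_losing_samples_def)
  then show ?thesis
    using assms
    by (simp add: measure_pmf.finite_measure_Diff data_pmf_def measure_Pi_pmf_Pi
        prob_arm2_losing_samples prob_arm1_samples)
qed

text \<open>Bernoulli's inequality bounds the first power below by 1/2, and (1 - 1/n)^n \<le> exp (-1) \<le> 2/5.\<close>
lemma power_one_minus_half_inverse_minus_power_ge:
  assumes "n > 0"
  shows "(1 - 1 / (2 * real n)) ^ n - (1 - 1 / real n) ^ n \<ge> 1 / 10"
proof -
  have "1 / 2 = 1 + real n * (- (1 / (2 * real n)))"
    using assms by simp
  also have "\<dots> \<le> (1 - 1 / (2 * real n)) ^ n"
    using Bernoulli_inequality[of "- (1 / (2 * real n))" n] assms by simp
  finally have half: "1 / 2 \<le> (1 - 1 / (2 * real n)) ^ n" .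
  have "(1 - 1 / real n) ^ n \<le> exp (- (1 / real n)) ^ n"
    using assms exp_ge_add_one_self[of "- (1 / real n)"] by (intro power_mono) auto
  also have "\<dots> = exp (-1)"
    using assms by (simp add: exp_of_nat_mult[symmetric])
  also have "\<dots> \<le> 2 / 5"
    using exp_lower_Taylor_quadratic[of 1] by (simp add: exp_minus field_simps)
  finally show ?thesis
    using half by simp
qed

theorem theorem2:
  fixes n :: nat
  assumes "n > 500"
  shows "\<exists>\<mu> :: (nat \<times> nat) pmf. set_pmf \<mu> \<subseteq> arm_pairs \<and>
    measure_pmf.prob (data_pmf n \<mu>)
      {D. (\<not> (\<exists>r\<in>R0. \<forall>s\<in>R0. emp_CE n D r \<le> emp_CE n D s)) \<and>
          (\<forall>rs :: nat \<Rightarrow> nat \<Rightarrow> real. (\<forall>m. rs m \<in> R0) \<longrightarrow>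
             (\<lambda>m. emp_CE n D (rs m)) \<longlonglongrightarrow> (INF r\<in>R0. emp_CE n D r) \<longrightarrow>
             filterlim (\<lambda>m. pop_CE \<mu> (rs m) - pop_CE \<mu> rstar) at_top sequentially)}
    \<ge> 0.09"
    (is "\<exists>\<mu>. _ \<and> measure_pmf.prob _ (?good \<mu>) \<ge> _")
proof (intro exI conjI)
  define p where "p = 1 / real n"
  have p: "0 < p" "p \<le> 1"
    using assms by (auto simp: p_def)
  let ?lost = "Pi {..<n} (\<lambda>_. arm2_losing_samples) - Pi {..<n} (\<lambda>_. arm1_samples)"
  have "?lost \<subseteq> ?good (mu_hard p)"
  proof
    fix D
    assume "D \<in> ?lost"
    then obtain i\<^sub>0 where D: "\<forall>i<n. D i \<in> arm2_losing_samples" "i\<^sub>0 < n" "D i\<^sub>0 = (2, 3, False)"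
      by (auto simp: arm2_losing_samples_def)
    show "D \<in> ?good (mu_hard p)"
      using emp_CE_no_minimizer[OF D] emp_CE_minimizing_seq_at_bot[OF D]
        pop_CE_mu_hard_excess_at_top[OF p] by (auto simp: R0_def)
  qed
  then have "measure_pmf.prob (data_pmf n (mu_hard p)) ?lost
      \<le> measure_pmf.prob (data_pmf n (mu_hard p)) (?good (mu_hard p))"
    by (intro measure_pmf.finite_measure_mono) auto
  moreover have "1 / 10 \<le> measure_pmf.prob (data_pmf n (mu_hard p)) ?lost"
    using prob_some_arm2_loss[of p n] power_one_minus_half_inverse_minus_power_ge[of n] p assms
    by (simp add: p_def mult.commute)
  ultimately show "0.09 \<le> measure_pmf.prob (data_pmf n (mu_hard p)) (?good (mu_hard p))"
    by simp
  show "set_pmf (mu_hard p) \<subseteq> arm_pairs"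
    by (rule set_pmf_mu_hard)
qed

end
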